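(* Let $q$ be a prime power and let $U(X), V(X) \in \mathbb{F}_q[X]$ with $\deg(V) < q$ and $i \geq 0$ an integer, such that $U(X) = V(X)\cdot \Lambda^i(X)$, where $\Lambda(X) = X^q - X$. Then for every integer $\ell$ with $0 \leq \ell < q$, $$U^{[\ell]}(X) \equiv (-1)^i \cdot V^{[\ell - i]}(X) \pmod{\Lambda(X)},$$ with the convention that $V^{[j]}(X) = 0$ for $j < 0$.
   Context: For a field $\mathbb{F}$ and $A(X) \in \mathbb{F}[X]$, the $\ell$-th Hasse derivative $A^{[\ell]}(X)$ is the coefficient of $Z^\ell$ in the expansion of $A(X+Z)$ as a polynomial in $Z$ with coefficients in $\mathbb{F}[X]$. *)

theory Defs
  imports "HOL-Computational_Algebra.Polynomial" "HOL-Library.Cardinality"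
begin

text \<open>The l-th Hasse derivative of A: the coefficient of Z^l in A(X+Z), where A(X+Z)
  is viewed as a polynomial in Z (outer variable) with coefficients in F[X] (inner variable).\<close>
definition hasse_deriv :: "'a::comm_ring_1 poly \<Rightarrow> nat \<Rightarrow> 'a poly" where
  "hasse_deriv A l = coeff (pcompose (map_poly (\<lambda>c. [:c:]) A) [:[:0, 1:], 1:]) l"

definition Lam :: "nat \<Rightarrow> 'a::comm_ring_1 poly" where
  "Lam q = monom 1 q - [:0, 1:]"

end

theory Submission
  imports Defs
begin

text \<open>
  Let \<open>H(A) = A(X + Z)\<close>, a polynomial in \<open>Z\<close> over \<open>F[X]\<close> whose coefficients are the
  Hasse derivatives of \<open>A\<close>. \<open>H\<close> is a ring homomorphism, and \<open>\<Lambda>(X + Z) = \<Lambda>(X) + \<Lambda>(Z)\<close>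
  because the binomial coefficients \<open>q choose j\<close> with \<open>0 < j < q\<close> vanish in \<open>F\<close>. Hence
  \<open>H(U) = H(V) (\<Lambda>(X) + \<Lambda>(Z))\<^sup>i \<equiv> H(V) \<Lambda>(Z)\<^sup>i\<close> modulo \<open>\<Lambda>(X)\<close>, and \<open>\<Lambda>(Z)\<^sup>i \<equiv> (-Z)\<^sup>i\<close>
  modulo \<open>Z\<^sup>q\<close>. Comparing coefficients of \<open>Z\<^sup>l\<close> for \<open>l < q\<close> gives the claim.
\<close>

definition hasse_expansion :: "'a::comm_ring_1 poly \<Rightarrow> 'a poly poly" where
  "hasse_expansion A = pcompose (map_poly (\<lambda>c. [:c:]) A) [:[:0, 1:], 1:]"

lemma coeff_hasse_expansion: "coeff (hasse_expansion A) l = hasse_deriv A l"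
  by (simp add: hasse_expansion_def hasse_deriv_def)

lemma map_poly_const_poly_diff:
  "map_poly (\<lambda>c. [:c:]) (p - q) = map_poly (\<lambda>c. [:c:]) p - map_poly (\<lambda>c. [:c:]) (q :: 'a::comm_ring_1 poly)"
  by (rule poly_eqI) (simp add: coeff_map_poly diff_to_poly)

lemma map_poly_const_poly_mult:
  "map_poly (\<lambda>c. [:c:]) (p * q) = map_poly (\<lambda>c. [:c:]) p * map_poly (\<lambda>c. [:c:]) (q :: 'a::comm_semiring_1 poly)"
  by (rule poly_eqI) (simp add: coeff_map_poly coeff_mult sum_to_poly mult_to_poly mult.commute)

lemma hasse_expansion_diff: "hasse_expansion (p - q) = hasse_expansion p - hasse_expansion q"
  by (simp add: hasse_expansion_def map_poly_const_poly_diff pcompose_diff)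

lemma hasse_expansion_mult: "hasse_expansion (p * q) = hasse_expansion p * hasse_expansion q"
  by (simp add: hasse_expansion_def map_poly_const_poly_mult pcompose_mult)

lemma hasse_expansion_power: "hasse_expansion (p ^ n) = hasse_expansion p ^ n"
  by (induction n) (simp_all add: hasse_expansion_mult hasse_expansion_def[of 1] pcompose_1)

lemma hasse_expansion_X: "hasse_expansion [:0, 1:] = [:[:0, 1:]:] + [:0, 1:]"
  by (simp add: hasse_expansion_def map_poly_pCons pcompose_pCons)

lemma power_card_eq_self:
  fixes x :: "'a::{finite, field}"
  shows "x ^ CARD('a) = x"
proof (cases "x = 0")
  case True
  then show ?thesis
    by (simp add: finite_UNIV_card_ge_0)
next
  case False
  define N where "N = UNIV - {0 :: 'a}"
  have "bij_betw ((*) x) N N"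
    using False by (intro bij_betw_byWitness[where f' = "\<lambda>y. y / x"]) (auto simp: N_def)
  then have "(\<Prod>y\<in>N. x * y) = \<Prod>N"
    by (rule prod.reindex_bij_betw)
  then have "x ^ card N * \<Prod>N = \<Prod>N"
    by (simp add: prod.distrib)
  moreover have "\<Prod>N \<noteq> 0"
    by (simp add: N_def)
  moreover have "card N = CARD('a) - 1"
    by (simp add: N_def card_Diff_singleton)
  ultimately have "x ^ (CARD('a) - 1) = 1"
    by simp
  moreover have "CARD('a) = Suc (CARD('a) - 1)"
    using finite_UNIV_card_ge_0 by simp
  ultimately show ?thesis
    by (metis power_Suc mult.right_neutral)
qed

text \<open>
  The polynomial \<open>(X + 1)\<^sup>q - X\<^sup>q - 1\<close> has degree below \<open>q\<close> but vanishes at all \<open>q\<close> points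
  of the field, so all its coefficients vanish.
\<close>
lemma of_nat_card_choose_eq_0:
  assumes "0 < j" "j < CARD('a::{finite, field})"
  shows "(of_nat (CARD('a) choose j) :: 'a) = 0"
proof -
  define q where "q = CARD('a)"
  define P :: "'a poly" where "P = [:1, 1:] ^ q - monom 1 q - 1"
  have "degree P < q"
  proof -
    have "coeff P k = 0" if "q - 1 < k" for k
    proof (cases "k = q")
      case True
      then show ?thesis
        using assms by (simp add: P_def q_def coeff_linear_power)
    next
      case False
      then have "degree ([:1, 1:] ^ q :: 'a poly) < k"
        using that degree_linear_power[of "1 :: 'a" q] by simp
      with False show ?thesis
        by (simp add: P_def coeff_eq_0)
    qed
    then have "degree P \<le> q - 1"
      by (intro degree_le) auto
    then show ?thesis
      using assms q_def by linarith
  qed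
  moreover have "poly P x = 0" for x
    by (simp add: P_def poly_monom q_def power_card_eq_self add.commute[of 1])
  ultimately have "P = 0"
    using card_poly_roots_bound[of P] by (force simp: q_def)
  then have "coeff P j = 0"
    by simp
  then show ?thesis
    using assms by (simp add: P_def q_def coeff_linear_poly_power)
qed

lemma add_power_frobenius:
  fixes x y :: "'b::comm_semiring_1"
  assumes "\<And>j. 0 < j \<Longrightarrow> j < q \<Longrightarrow> (of_nat (q choose j) :: 'b) = 0" "0 < q"
  shows "(x + y) ^ q = x ^ q + y ^ q"
proof -
  have "(x + y) ^ q = (\<Sum>k\<in>{0, q}. of_nat (q choose k) * x ^ k * y ^ (q - k))"
    unfolding binomial_ring using assms by (intro sum.mono_neutral_right) auto
  then show ?thesis
    using assms(2) by (simp add: add.commute)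
qed

text \<open>The second summand is \<open>\<Lambda>\<close> in the outer variable \<open>Z\<close>.\<close>
lemma hasse_expansion_Lam:
  "hasse_expansion (Lam CARD('a::{finite, field})) = [:Lam CARD('a):] + (Lam CARD('a) :: 'a poly poly)"
proof -
  define q where "q = CARD('a)"
  have binomials_vanish: "of_nat (q choose j) = (0 :: 'a poly poly)" if "0 < j" "j < q" for j
    using of_nat_card_choose_eq_0 that by (simp add: of_nat_poly q_def)
  have "hasse_expansion (Lam q :: 'a poly) =
      ([:[:0, 1:]:] + [:0, 1:]) ^ q - ([:[:0, 1:]:] + [:0, 1:])"
    by (simp add: Lam_def monom_altdef hasse_expansion_diff hasse_expansion_power hasse_expansion_X)
  also have "([:[:0, 1:]:] + [:0, 1:]) ^ q = [:[:0, 1:]:] ^ q + ([:0, 1:] :: 'a poly poly) ^ q"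
    by (rule add_power_frobenius[OF binomials_vanish]) (simp_all add: q_def)
  finally show ?thesis
    by (simp add: Lam_def monom_altdef poly_const_pow q_def)
qed

lemma diff_dvd_power_diff: "x - y dvd x ^ n - (y :: 'a::comm_ring_1) ^ n"
  by (simp add: power_diff_sumr2)

lemma hasse_expansion_mult_Lam_power:
  fixes V :: "'a::{finite, field} poly"
  obtains R S where "hasse_expansion (V * Lam CARD('a) ^ i) =
      monom ((-1) ^ i) i * hasse_expansion V + monom 1 CARD('a) * R + [:Lam CARD('a):] * S"
proof -
  define q where "q = CARD('a)"
  define \<Lambda>\<^sub>X :: "'a poly poly" where "\<Lambda>\<^sub>X = [:Lam q:]"
  define \<Lambda>\<^sub>Z :: "'a poly poly" where "\<Lambda>\<^sub>Z = Lam q"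
  obtain S where S: "(\<Lambda>\<^sub>X + \<Lambda>\<^sub>Z) ^ i - \<Lambda>\<^sub>Z ^ i = \<Lambda>\<^sub>X * S"
    using diff_dvd_power_diff[of "\<Lambda>\<^sub>X + \<Lambda>\<^sub>Z" "\<Lambda>\<^sub>Z" i] by (auto elim: dvdE)
  have "\<Lambda>\<^sub>Z - monom (-1) 1 = monom 1 q"
    by (simp add: \<Lambda>\<^sub>Z_def Lam_def monom_Suc monom_0)
  then obtain R where R: "\<Lambda>\<^sub>Z ^ i - monom (-1) 1 ^ i = monom 1 q * R"
    using diff_dvd_power_diff[of "\<Lambda>\<^sub>Z" "monom (-1) 1" i] by (auto elim: dvdE)
  have "hasse_expansion (V * Lam q ^ i) = hasse_expansion V * (\<Lambda>\<^sub>X + \<Lambda>\<^sub>Z) ^ i"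
    by (simp add: hasse_expansion_mult hasse_expansion_power hasse_expansion_Lam q_def \<Lambda>\<^sub>X_def \<Lambda>\<^sub>Z_def)
  also have "(\<Lambda>\<^sub>X + \<Lambda>\<^sub>Z) ^ i = monom ((-1) ^ i) i + monom 1 q * R + \<Lambda>\<^sub>X * S"
    using R S by (simp add: monom_power diff_eq_eq)
  finally show thesis
    by (intro that[of "hasse_expansion V * R" "hasse_expansion V * S"])
      (simp add: algebra_simps q_def \<Lambda>\<^sub>X_def)
qed

theorem lemma2p4:
  fixes U V :: "'a::{finite, field} poly" and i l :: nat
  assumes "degree V < CARD('a)"
    and "U = V * Lam (CARD('a)) ^ i"
    and "l < CARD('a)"
  shows "hasse_deriv U l mod Lam (CARD('a)) =
         smult ((-1) ^ i) (if i \<le> l then hasse_deriv V (l - i) else 0) mod Lam (CARD('a))"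
proof -
  obtain R S where H: "hasse_expansion U =
      monom ((-1) ^ i) i * hasse_expansion V + monom 1 CARD('a) * R + [:Lam CARD('a):] * S"
    using hasse_expansion_mult_Lam_power assms(2) by blast
  have "hasse_deriv U l =
      smult ((-1) ^ i) (if i \<le> l then hasse_deriv V (l - i) else 0) + Lam CARD('a) * coeff S l"
    using assms(3) by (cases "even i") (simp_all add: H coeff_monom_mult flip: coeff_hasse_expansion)
  then show ?thesis
    by simp
qed

end
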